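(* Let $\mathcal A$ be a von Neumann algebra, $G$ a group of normal $*$-automorphisms of $\mathcal A$, and $\varphi$ a faithful $G$-strongly quasi invariant state on $\mathcal A$ with cocycles $(x_g)_{g\in G}$. If $x_g\in\mathcal F(G)$ for some $g\in G$, then $x_g=\mathbf 1$.
   Context: $\varphi$ is $G$-strongly quasi invariant if $\varphi$ is a faithful normal state and for every $g\in G$ there is a self-adjoint $x_g\in\mathcal A$ with $\varphi(g(a))=\varphi(x_ga)$ for all $a\in\mathcal A$. $\mathcal F(G)=\{a\in\mathcal A:h(a)=a\ \forall h\in G\}$. *)

theory Defs
  imports Complex_Main
begin

class chilbert = ab_group_add +
  fixes scaleC :: "complex \<Rightarrow> 'a \<Rightarrow> 'a"
    and cinner :: "'a \<Rightarrow> 'a \<Rightarrow> complex"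
  assumes scaleC_add_right: "scaleC a (x + y) = scaleC a x + scaleC a y"
    and scaleC_add_left: "scaleC (a + b) x = scaleC a x + scaleC b x"
    and scaleC_scaleC: "scaleC a (scaleC b x) = scaleC (a * b) x"
    and scaleC_one: "scaleC 1 x = x"
    and cinner_commute: "cinner x y = cnj (cinner y x)"
    and cinner_add_right: "cinner x (y + z) = cinner x y + cinner x z"
    and cinner_scaleC_right: "cinner x (scaleC a y) = a * cinner x y"
    and cinner_self_nonneg: "Im (cinner x x) = 0 \<and> 0 \<le> Re (cinner x x)"
    and cinner_self_zero: "cinner x x = 0 \<Longrightarrow> x = 0"
    and cinner_complete:
      "(\<forall>e>0. \<exists>N::nat. \<forall>m\<ge>N. \<forall>n\<ge>N. sqrt (Re (cinner (X m - X n) (X m - X n))) < e)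
       \<Longrightarrow> \<exists>L. \<forall>e>0. \<exists>N::nat. \<forall>n\<ge>N. sqrt (Re (cinner (X n - L) (X n - L))) < e"

definition cnorm :: "'h::chilbert \<Rightarrow> real" where
  "cnorm x = sqrt (Re (cinner x x))"

definition bounded_op :: "('h::chilbert \<Rightarrow> 'h) \<Rightarrow> bool" where
  "bounded_op T \<longleftrightarrow> (\<forall>x y. T (x + y) = T x + T y) \<and> (\<forall>a x. T (scaleC a x) = scaleC a (T x))
     \<and> (\<exists>K. \<forall>x. cnorm (T x) \<le> K * cnorm x)"

definition adjoint :: "('h::chilbert \<Rightarrow> 'h) \<Rightarrow> ('h \<Rightarrow> 'h)" where
  "adjoint T = (THE S. \<forall>x y. cinner (T x) y = cinner x (S y))"

definition op_add :: "('h::chilbert \<Rightarrow> 'h) \<Rightarrow> ('h \<Rightarrow> 'h) \<Rightarrow> ('h \<Rightarrow> 'h)" where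
  "op_add A B = (\<lambda>x. A x + B x)"

definition op_scale :: "complex \<Rightarrow> ('h::chilbert \<Rightarrow> 'h) \<Rightarrow> ('h \<Rightarrow> 'h)" where
  "op_scale c A = (\<lambda>x. scaleC c (A x))"

definition op_zero :: "'h::chilbert \<Rightarrow> 'h" where
  "op_zero = (\<lambda>x. 0)"

text \<open>Operator product is composition; the unit is id.\<close>

definition op_pos :: "('h::chilbert \<Rightarrow> 'h) \<Rightarrow> bool" where
  "op_pos T \<longleftrightarrow> (\<forall>x. Im (cinner x (T x)) = 0 \<and> 0 \<le> Re (cinner x (T x)))"

definition op_le :: "('h::chilbert \<Rightarrow> 'h) \<Rightarrow> ('h \<Rightarrow> 'h) \<Rightarrow> bool" where
  "op_le A B \<longleftrightarrow> op_pos (\<lambda>x. B x - A x)"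

definition commutant :: "('h::chilbert \<Rightarrow> 'h) set \<Rightarrow> ('h \<Rightarrow> 'h) set" where
  "commutant S = {T. bounded_op T \<and> (\<forall>A\<in>S. T \<circ> A = A \<circ> T)}"

definition von_neumann_algebra :: "('h::chilbert \<Rightarrow> 'h) set \<Rightarrow> bool" where
  "von_neumann_algebra M \<longleftrightarrow> M \<subseteq> {T. bounded_op T} \<and> (\<forall>A\<in>M. adjoint A \<in> M)
     \<and> M = commutant (commutant M)"

definition is_lub_in :: "('h::chilbert \<Rightarrow> 'h) set \<Rightarrow> ('h \<Rightarrow> 'h) set \<Rightarrow> ('h \<Rightarrow> 'h) \<Rightarrow> bool" where
  "is_lub_in M D a \<longleftrightarrow> a \<in> M \<and> adjoint a = a \<and> (\<forall>A\<in>D. op_le A a)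
     \<and> (\<forall>b\<in>M. adjoint b = b \<and> (\<forall>A\<in>D. op_le A b) \<longrightarrow> op_le a b)"

text \<open>Bounded increasing nets of positive elements, represented by their (upward directed) ranges.\<close>
definition pos_directed_in :: "('h::chilbert \<Rightarrow> 'h) set \<Rightarrow> ('h \<Rightarrow> 'h) set \<Rightarrow> bool" where
  "pos_directed_in M D \<longleftrightarrow> D \<subseteq> M \<and> D \<noteq> {} \<and> (\<forall>A\<in>D. op_pos A)
     \<and> (\<forall>A\<in>D. \<forall>B\<in>D. \<exists>C\<in>D. op_le A C \<and> op_le B C)"

definition normal_star_automorphism ::
  "('h::chilbert \<Rightarrow> 'h) set \<Rightarrow> (('h \<Rightarrow> 'h) \<Rightarrow> ('h \<Rightarrow> 'h)) \<Rightarrow> bool" where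
  "normal_star_automorphism M \<alpha> \<longleftrightarrow> bij_betw \<alpha> M M
     \<and> (\<forall>A\<in>M. \<forall>B\<in>M. \<alpha> (op_add A B) = op_add (\<alpha> A) (\<alpha> B))
     \<and> (\<forall>c. \<forall>A\<in>M. \<alpha> (op_scale c A) = op_scale c (\<alpha> A))
     \<and> (\<forall>A\<in>M. \<forall>B\<in>M. \<alpha> (A \<circ> B) = \<alpha> A \<circ> \<alpha> B)
     \<and> (\<forall>A\<in>M. \<alpha> (adjoint A) = adjoint (\<alpha> A))
     \<and> (\<forall>D a. pos_directed_in M D \<and> is_lub_in M D a \<longrightarrow> is_lub_in M (\<alpha> ` D) (\<alpha> a))"

text \<open>G is a group (under composition, as maps on M) of normal *-automorphisms of M.\<close>
definition automorphism_group ::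
  "('h::chilbert \<Rightarrow> 'h) set \<Rightarrow> (('h \<Rightarrow> 'h) \<Rightarrow> ('h \<Rightarrow> 'h)) set \<Rightarrow> bool" where
  "automorphism_group M G \<longleftrightarrow> (\<forall>g\<in>G. normal_star_automorphism M g)
     \<and> (\<exists>e\<in>G. \<forall>a\<in>M. e a = a)
     \<and> (\<forall>g\<in>G. \<forall>h\<in>G. \<exists>k\<in>G. \<forall>a\<in>M. k a = g (h a))
     \<and> (\<forall>g\<in>G. \<exists>k\<in>G. \<forall>a\<in>M. k (g a) = a \<and> g (k a) = a)"

definition is_state :: "('h::chilbert \<Rightarrow> 'h) set \<Rightarrow> (('h \<Rightarrow> 'h) \<Rightarrow> complex) \<Rightarrow> bool" where
  "is_state M \<phi> \<longleftrightarrow> (\<forall>A\<in>M. \<forall>B\<in>M. \<phi> (op_add A B) = \<phi> A + \<phi> B)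
     \<and> (\<forall>c. \<forall>A\<in>M. \<phi> (op_scale c A) = c * \<phi> A)
     \<and> (\<forall>A\<in>M. Im (\<phi> (adjoint A \<circ> A)) = 0 \<and> 0 \<le> Re (\<phi> (adjoint A \<circ> A)))
     \<and> \<phi> id = 1"

definition faithful :: "('h::chilbert \<Rightarrow> 'h) set \<Rightarrow> (('h \<Rightarrow> 'h) \<Rightarrow> complex) \<Rightarrow> bool" where
  "faithful M \<phi> \<longleftrightarrow> (\<forall>A\<in>M. \<phi> (adjoint A \<circ> A) = 0 \<longrightarrow> A = op_zero)"

definition normal_functional :: "('h::chilbert \<Rightarrow> 'h) set \<Rightarrow> (('h \<Rightarrow> 'h) \<Rightarrow> complex) \<Rightarrow> bool" where
  "normal_functional M \<phi> \<longleftrightarrow> (\<forall>D a. pos_directed_in M D \<and> is_lub_in M D a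
      \<longrightarrow> \<phi> a = complex_of_real (SUP A\<in>D. Re (\<phi> A)))"

definition strongly_quasi_invariant ::
  "('h::chilbert \<Rightarrow> 'h) set \<Rightarrow> (('h \<Rightarrow> 'h) \<Rightarrow> ('h \<Rightarrow> 'h)) set \<Rightarrow> (('h \<Rightarrow> 'h) \<Rightarrow> complex)
     \<Rightarrow> ((('h \<Rightarrow> 'h) \<Rightarrow> ('h \<Rightarrow> 'h)) \<Rightarrow> ('h \<Rightarrow> 'h)) \<Rightarrow> bool" where
  "strongly_quasi_invariant M G \<phi> x \<longleftrightarrow> is_state M \<phi> \<and> faithful M \<phi> \<and> normal_functional M \<phi>
     \<and> (\<forall>g\<in>G. x g \<in> M \<and> adjoint (x g) = x g \<and> (\<forall>a\<in>M. \<phi> (g a) = \<phi> (x g \<circ> a)))"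

definition fixed_points ::
  "('h::chilbert \<Rightarrow> 'h) set \<Rightarrow> (('h \<Rightarrow> 'h) \<Rightarrow> ('h \<Rightarrow> 'h)) set \<Rightarrow> ('h \<Rightarrow> 'h) set" where
  "fixed_points M G = {a\<in>M. \<forall>h\<in>G. h a = a}"

end

theory Submission
  imports Defs "HOL-Analysis.Inner_Product"
begin

text \<open>Applying the cocycle identity to \<open>a = 1\<close> and \<open>a = x\<^sub>g\<close>, and using \<open>g(1) = 1\<close> and
  \<open>g(x\<^sub>g) = x\<^sub>g\<close>, gives \<open>\<phi>(x\<^sub>g) = \<phi>(1) = 1\<close> and \<open>\<phi>(x\<^sub>g\<^sup>2) = \<phi>(x\<^sub>g) = 1\<close>. Hence
  \<open>\<phi>((x\<^sub>g - 1)\<^sup>*(x\<^sub>g - 1)) = \<phi>(x\<^sub>g\<^sup>2) - 2\<phi>(x\<^sub>g) + 1 = 0\<close>, and faithfulness forces \<open>x\<^sub>g = 1\<close>.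
  Because \<open>adjoint\<close> is a definite description, the hypothesis \<open>(x\<^sub>g)\<^sup>* = x\<^sub>g\<close> carries information
  only once bounded operators are known to have adjoints; this is where the Riesz representation
  theorem enters.\<close>

lemma scaleC_zero_left [simp]: "scaleC 0 (x::'a::chilbert) = 0"
  using scaleC_add_left [of 0 0 x] by simp

lemma scaleC_minus_left: "scaleC (- a) (x::'a::chilbert) = - scaleC a x"
  using scaleC_add_left [of a "- a" x] by (simp add: add_eq_0_iff)

lemma scaleC_minus1_left [simp]: "scaleC (- 1) (x::'a::chilbert) = - x"
  by (simp add: scaleC_minus_left scaleC_one)

lemma cinner_zero_right [simp]: "cinner (x::'a::chilbert) 0 = 0"
  using cinner_add_right [of x 0 0] by simp

lemma cinner_add_left: "cinner ((x::'a::chilbert) + y) z = cinner x z + cinner y z"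
  by (metis cinner_add_right cinner_commute complex_cnj_add)

lemma cinner_scaleC_left: "cinner (scaleC a (x::'a::chilbert)) y = cnj a * cinner x y"
  by (metis cinner_commute cinner_scaleC_right complex_cnj_mult)

lemma cinner_minus_right: "cinner (x::'a::chilbert) (- y) = - cinner x y"
  using cinner_add_right [of x y "- y"] by (simp add: add_eq_0_iff)

lemma cinner_minus_left: "cinner (- (x::'a::chilbert)) y = - cinner x y"
  by (metis cinner_commute cinner_minus_right complex_cnj_minus)

lemma cinner_diff_right: "cinner (x::'a::chilbert) (y - z) = cinner x y - cinner x z"
  using cinner_add_right [of x y "- z"] by (simp add: cinner_minus_right)

lemma cinner_diff_left: "cinner ((x::'a::chilbert) - y) z = cinner x z - cinner y z"
  using cinner_add_left [of x "- y" z] by (simp add: cinner_minus_left)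

lemma Re_cinner_commute: "Re (cinner (x::'a::chilbert) y) = Re (cinner y x)"
  using cinner_commute [of x y] by simp

lemma Re_cinner_self_eq_0_iff: "Re (cinner x x) = 0 \<longleftrightarrow> (x::'a::chilbert) = 0"
  using cinner_self_nonneg [of x] cinner_self_zero [of x] by (auto simp: complex_eq_iff)

lemma cinner_ext: "(\<And>u. cinner u a = cinner u b) \<Longrightarrow> (a::'a::chilbert) = b"
  using cinner_diff_right [of "a - b" a b] cinner_self_zero [of "a - b"] by simp

text \<open>The underlying real Hilbert space, with inner product \<open>Re \<langle>x, y\<rangle>\<close>, through which the
  library's real theory (Cauchy--Schwarz, completeness, limits) becomes available.\<close>

typedef 'a realified = "UNIV :: 'a::chilbert set"
  morphisms of_realified realified
  by simp

lemma of_realified_realified [simp]: "of_realified (realified x) = x"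
  by (simp add: realified_inverse)

instantiation realified :: (chilbert) real_inner
begin

definition "0 = realified 0"
definition "a + b = realified (of_realified a + of_realified b)"
definition "a - b = realified (of_realified a - of_realified b)"
definition "- a = realified (- of_realified a)"
definition "r *\<^sub>R a = realified (scaleC (complex_of_real r) (of_realified a))"
definition "inner a b = Re (cinner (of_realified a) (of_realified b))"
definition "norm (a::'a realified) = sqrt (inner a a)"
definition "dist (a::'a realified) b = norm (a - b)"
definition "sgn (a::'a realified) = inverse (norm a) *\<^sub>R a"
definition "uniformity = (INF e\<in>{0<..}. principal {(x::'a realified, y). dist x y < e})"
definition "open (U::'a realified set) =
  (\<forall>x\<in>U. eventually (\<lambda>(x', y). x' = x \<longrightarrow> y \<in> U) uniformity)"

instance
proof
  fix a b c :: "'a realified" and r s :: real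
  show "inner a b = inner b a"
    by (simp add: inner_realified_def Re_cinner_commute)
  show "inner (a + b) c = inner a c + inner b c"
    by (simp add: inner_realified_def plus_realified_def cinner_add_left)
  show "inner (r *\<^sub>R a) b = r * inner a b"
    by (simp add: inner_realified_def scaleR_realified_def cinner_scaleC_left)
  show "0 \<le> inner a a"
    by (simp add: inner_realified_def cinner_self_nonneg)
  show "inner a a = 0 \<longleftrightarrow> a = 0"
    by (simp add: inner_realified_def zero_realified_def Re_cinner_self_eq_0_iff
        flip: of_realified_inject)
qed (simp_all add: plus_realified_def minus_realified_def uminus_realified_def zero_realified_def
    scaleR_realified_def norm_realified_def dist_realified_def sgn_realified_def
    uniformity_realified_def open_realified_def of_realified_inverse add_ac
    scaleC_add_right scaleC_add_left scaleC_scaleC scaleC_one)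

end

lemma norm_realified: "norm (realified x) = cnorm x"
  by (simp add: norm_realified_def inner_realified_def cnorm_def)

lemma realified_add: "realified (x + y) = realified x + realified y"
  by (simp add: plus_realified_def)

lemma of_realified_diff: "of_realified (a - b) = of_realified a - of_realified b"
  by (simp add: minus_realified_def)

instance realified :: (chilbert) complete_space
proof
  fix X :: "nat \<Rightarrow> 'a realified"
  assume "Cauchy X"
  then have "\<forall>e>0. \<exists>N::nat. \<forall>m\<ge>N. \<forall>n\<ge>N. sqrt (Re (cinner (of_realified (X m) - of_realified (X n))
      (of_realified (X m) - of_realified (X n)))) < e"
    unfolding Cauchy_def dist_realified_def norm_realified_def inner_realified_def
      of_realified_diff .
  from cinner_complete [OF this] obtain L where
    "\<forall>e>0. \<exists>N::nat. \<forall>n\<ge>N. sqrt (Re (cinner (of_realified (X n) - L) (of_realified (X n) - L))) < e"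
    by blast
  then have "X \<longlonglongrightarrow> realified L"
    unfolding lim_sequentially dist_realified_def norm_realified_def inner_realified_def
      of_realified_diff by simp
  then show "convergent X"
    by (auto simp: convergent_def)
qed

lemma cnorm_nonneg: "0 \<le> cnorm (x::'a::chilbert)"
  by (metis norm_ge_zero norm_realified)

lemma cnorm_triangle: "cnorm (x + y) \<le> cnorm x + cnorm (y::'a::chilbert)"
  by (metis norm_realified norm_triangle_ineq realified_add)

lemma cnorm_scaleC: "cnorm (scaleC c x) = cmod c * cnorm (x::'a::chilbert)"
proof -
  have "cinner (scaleC c x) (scaleC c x) = (cnj c * c) * cinner x x"
    by (simp add: cinner_scaleC_left cinner_scaleC_right)
  also have "cnj c * c = complex_of_real ((cmod c)\<^sup>2)"
    by (metis complex_norm_square mult.commute of_real_power)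
  finally have "Re (cinner (scaleC c x) (scaleC c x)) = (cmod c)\<^sup>2 * Re (cinner x x)"
    by simp
  then show ?thesis
    by (simp add: cnorm_def real_sqrt_mult)
qed

lemma Re_cinner_le_cnorm: "Re (cinner x y) \<le> cnorm x * cnorm (y::'a::chilbert)"
  using norm_cauchy_schwarz [of "realified x" "realified y"]
  by (simp add: inner_realified_def norm_realified)

text \<open>Rotating \<open>y\<close> by the phase of \<open>\<langle>x, y\<rangle>\<close> reduces Cauchy--Schwarz to its real part.\<close>

lemma cmod_cinner_le_cnorm: "cmod (cinner x y) \<le> cnorm x * cnorm (y::'a::chilbert)"
proof (cases "cinner x y = 0")
  case True
  then show ?thesis
    by (simp add: cnorm_nonneg)
next
  case False
  define l where "l = cnj (cinner x y) / cmod (cinner x y)"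
  have "cmod l = 1"
    using False by (simp add: l_def norm_divide)
  have "l * cinner x y = cmod (cinner x y)"
    using False by (simp add: l_def complex_norm_square [symmetric] power2_eq_square field_simps)
  then have "cmod (cinner x y) = Re (cinner x (scaleC l y))"
    by (simp add: cinner_scaleC_right)
  also have "\<dots> \<le> cnorm x * cnorm (scaleC l y)"
    by (rule Re_cinner_le_cnorm)
  also have "\<dots> = cnorm x * cnorm y"
    by (simp add: cnorm_scaleC \<open>cmod l = 1\<close>)
  finally show ?thesis .
qed

section \<open>The Riesz representation theorem\<close>

lemma quadratic_nonneg_imp_linear_coeff_zero:
  fixes a b :: real
  assumes "0 \<le> b" and "\<And>t. 0 \<le> t * a + t\<^sup>2 * b"
  shows "a = 0"
proof -
  define t where "t = - a / (b + 1)"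
  have "(b + 1) * t = - a"
    using \<open>0 \<le> b\<close> by (simp add: t_def)
  have "0 \<le> (b + 1)\<^sup>2 * (t * a + t\<^sup>2 * b)"
    using assms(2) [of t] by simp
  also have "\<dots> = (b + 1) * ((b + 1) * t) * a + ((b + 1) * t)\<^sup>2 * b"
    by (simp add: algebra_simps power2_eq_square)
  also have "\<dots> = - (a\<^sup>2)"
    unfolding \<open>(b + 1) * t = - a\<close> by (simp add: algebra_simps power2_eq_square)
  finally show ?thesis
    by simp
qed

text \<open>The representing vector of \<open>f\<close> is the minimiser of this energy.\<close>

definition riesz_energy :: "('a::real_inner \<Rightarrow> real) \<Rightarrow> 'a \<Rightarrow> real" where
  "riesz_energy f u = (norm u)\<^sup>2 / 2 - f u"

lemma riesz_energy_midpoint: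
  assumes "linear f"
  shows "riesz_energy f a + riesz_energy f b - 2 * riesz_energy f ((1/2) *\<^sub>R (a + b))
    = (norm (a - b))\<^sup>2 / 4"
proof -
  have "(norm (a + b))\<^sup>2 + (norm (a - b))\<^sup>2 = 2 * (norm a)\<^sup>2 + 2 * (norm b)\<^sup>2"
    by (simp add: power2_norm_eq_inner inner_add_left inner_add_right inner_diff_left
        inner_diff_right inner_commute [of b a])
  moreover have "(norm ((1/2) *\<^sub>R (a + b)))\<^sup>2 = (norm (a + b))\<^sup>2 / 4"
    by (simp add: power2_eq_square)
  ultimately show ?thesis
    by (simp add: riesz_energy_def linear_add [OF assms] linear_scale [OF assms] algebra_simps)
qed

lemma riesz_energy_lower_bound:
  assumes "\<And>u. f u \<le> norm u * K"
  shows "- K\<^sup>2 / 2 \<le> riesz_energy f u"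
proof -
  have "0 \<le> (norm u - K)\<^sup>2"
    by simp
  then show ?thesis
    using assms [of u] by (simp add: riesz_energy_def power2_eq_square algebra_simps)
qed

lemma riesz_energy_minimizing_seq_Cauchy:
  assumes "linear f" and m_le: "\<And>v. m \<le> riesz_energy f v"
    and u: "\<And>n. riesz_energy f (u n) < m + inverse (real (Suc n))"
  shows "Cauchy u"
proof (rule metric_CauchyI)
  fix e :: real
  assume "0 < e"
  then obtain N where N: "inverse (real (Suc N)) < e\<^sup>2 / 8"
    by (metis reals_Archimedean zero_less_divide_iff zero_less_numeral zero_less_power)
  have "dist (u p) (u n) < e" if "N \<le> p" "N \<le> n" for p n
  proof -
    have "inverse (real (Suc p)) \<le> inverse (real (Suc N))"
      "inverse (real (Suc n)) \<le> inverse (real (Suc N))"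
      using that by (simp_all add: le_imp_inverse_le)
    then have "(norm (u p - u n))\<^sup>2 / 4 < e\<^sup>2 / 4"
      using riesz_energy_midpoint [OF assms(1), of "u p" "u n"]
        u [of p] u [of n] m_le [of "(1/2) *\<^sub>R (u p + u n)"] N by linarith
    then show ?thesis
      using \<open>0 < e\<close> by (simp add: dist_norm power_less_imp_less_base)
  qed
  then show "\<exists>M. \<forall>p\<ge>M. \<forall>n\<ge>M. dist (u p) (u n) < e"
    by blast
qed

lemma riesz_energy_has_minimizer:
  fixes f :: "'a::{real_inner, complete_space} \<Rightarrow> real"
  assumes "bounded_linear f"
  shows "\<exists>z. \<forall>v. riesz_energy f z \<le> riesz_energy f v"
proof -
  let ?E = "riesz_energy f"
  obtain K where K: "\<And>u. norm (f u) \<le> norm u * K"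
    using bounded_linear.bounded [OF assms] by blast
  have bdd: "bdd_below (range ?E)"
    using riesz_energy_lower_bound [of f K] K by (intro bdd_belowI2) (auto dest: abs_le_D1)
  define m where "m = Inf (range ?E)"
  have m_le: "m \<le> ?E v" for v
    unfolding m_def by (rule cInf_lower) (simp_all add: bdd)
  have "\<exists>u. ?E u < m + inverse (real (Suc n))" for n
    using cInf_lessD [of "range ?E" "m + inverse (real (Suc n))"] by (auto simp: m_def)
  then obtain u where u: "\<And>n. ?E (u n) < m + inverse (real (Suc n))"
    by metis
  then have "Cauchy u"
    using riesz_energy_minimizing_seq_Cauchy bounded_linear.linear [OF assms] m_le by blast
  then obtain z where "u \<longlonglongrightarrow> z"
    using Cauchy_convergent convergent_def by blast
  then have "(\<lambda>n. ?E (u n)) \<longlonglongrightarrow> ?E z"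
    unfolding riesz_energy_def by (intro tendsto_intros bounded_linear.tendsto [OF assms]) auto
  moreover have "(\<lambda>n. ?E (u n)) \<longlonglongrightarrow> m"
  proof (rule tendsto_sandwich [of "\<lambda>n. m" _ _ "\<lambda>n. m + inverse (real (Suc n))"])
    show "\<forall>\<^sub>F n in sequentially. ?E (u n) \<le> m + inverse (real (Suc n))"
      using u by (simp add: less_imp_le)
    show "(\<lambda>n. m + inverse (real (Suc n))) \<longlonglongrightarrow> m"
      by (rule LIMSEQ_inverse_real_of_nat_add)
  qed (simp_all add: m_le)
  ultimately have "?E z = m"
    by (rule LIMSEQ_unique)
  then show ?thesis
    using m_le by auto
qed

text \<open>At a minimiser \<open>z\<close>, \<open>t \<mapsto> E(z + t v)\<close> is a quadratic in \<open>t\<close> minimal at \<open>0\<close>, so its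
  linear coefficient \<open>\<langle>z, v\<rangle> - f v\<close> vanishes.\<close>

lemma riesz_energy_minimizer_represents:
  assumes "linear f" and min: "\<And>v. riesz_energy f z \<le> riesz_energy f v"
  shows "f v = inner z v"
proof -
  have "0 \<le> t * (inner z v - f v) + t\<^sup>2 * ((norm v)\<^sup>2 / 2)" for t
  proof -
    have "(norm (z + t *\<^sub>R v))\<^sup>2 = (norm z)\<^sup>2 + 2 * t * inner z v + t\<^sup>2 * (norm v)\<^sup>2"
      by (simp add: power2_norm_eq_inner inner_add_left inner_add_right inner_commute [of v z]
          algebra_simps) (simp add: power2_eq_square)
    then have "riesz_energy f (z + t *\<^sub>R v)
        = riesz_energy f z + t * (inner z v - f v) + t\<^sup>2 * ((norm v)\<^sup>2 / 2)"
      by (simp add: riesz_energy_def linear_add [OF assms(1)] linear_scale [OF assms(1)]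
          algebra_simps)
    then show ?thesis
      using min [of "z + t *\<^sub>R v"] by linarith
  qed
  then have "inner z v - f v = 0"
    by (intro quadratic_nonneg_imp_linear_coeff_zero [of "(norm v)\<^sup>2 / 2"]) auto
  then show ?thesis
    by simp
qed

lemma real_riesz_representation:
  fixes f :: "'a::{real_inner, complete_space} \<Rightarrow> real"
  assumes "bounded_linear f"
  shows "\<exists>z. \<forall>u. f u = inner z u"
  using riesz_energy_has_minimizer [OF assms]
    riesz_energy_minimizer_represents [OF bounded_linear.linear [OF assms]]
  by blast

lemma chilbert_riesz_representation:
  fixes f :: "'a::chilbert \<Rightarrow> complex"
  assumes add: "\<And>u v. f (u + v) = f u + f v"
    and scale: "\<And>c u. f (scaleC c u) = c * f u"
    and bound: "\<And>u. cmod (f u) \<le> K * cnorm u"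
  shows "\<exists>z. \<forall>u. f u = cinner z u"
proof -
  have "bounded_linear (\<lambda>a. Re (f (of_realified a)))"
  proof (rule bounded_linear_intro [where K = K])
    fix a b :: "'a realified" and r :: real
    show "Re (f (of_realified (a + b))) = Re (f (of_realified a)) + Re (f (of_realified b))"
      by (simp add: plus_realified_def add)
    show "Re (f (of_realified (r *\<^sub>R a))) = r *\<^sub>R Re (f (of_realified a))"
      by (simp add: scaleR_realified_def scale)
    show "norm (Re (f (of_realified a))) \<le> norm a * K"
      using abs_Re_le_cmod [of "f (of_realified a)"] bound [of "of_realified a"]
      by (metis norm_realified of_realified_inverse mult.commute order_trans real_norm_def)
  qed
  then obtain z where z: "\<And>a. Re (f (of_realified a)) = inner z a"
    using real_riesz_representation by blast
  have Re_f: "Re (f w) = Re (cinner (of_realified z) w)" for w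
    using z [of "realified w"] by (simp add: inner_realified_def)
  have "f w = cinner (of_realified z) w" for w
  proof (rule complex_eqI)
    show "Re (f w) = Re (cinner (of_realified z) w)"
      by (rule Re_f)
    show "Im (f w) = Im (cinner (of_realified z) w)"
      using Re_f [of "scaleC \<i> w"] by (simp add: scale cinner_scaleC_right)
  qed
  then show ?thesis
    by blast
qed

section \<open>Bounded operators and adjoints\<close>

lemma bounded_op_add_apply: "bounded_op T \<Longrightarrow> T (x + y) = T x + T y"
  by (simp add: bounded_op_def)

lemma bounded_op_scaleC_apply: "bounded_op T \<Longrightarrow> T (scaleC c x) = scaleC c (T x)"
  by (simp add: bounded_op_def)

lemma bounded_op_diff_apply: "bounded_op T \<Longrightarrow> T (x - y) = T x - T y"
  using bounded_op_add_apply [of T "x - y" y] by (simp add: eq_diff_eq)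

lemma bounded_op_nonneg_bound:
  assumes "bounded_op T"
  obtains K where "0 \<le> K" and "\<And>u. cnorm (T u) \<le> K * cnorm u"
proof -
  obtain K where K: "\<And>u. cnorm (T u) \<le> K * cnorm u"
    using assms unfolding bounded_op_def by blast
  have "cnorm (T u) \<le> max K 0 * cnorm u" for u
    using K [of u] by (meson cnorm_nonneg max.cobounded1 mult_right_mono order_trans)
  then show thesis
    using that [of "max K 0"] by simp
qed

lemma bounded_op_id: "bounded_op id"
  unfolding bounded_op_def by (auto intro: exI [of _ 1])

lemma bounded_op_add:
  assumes "bounded_op A" and "bounded_op B"
  shows "bounded_op (op_add A B)"
proof -
  obtain K L where K: "\<And>u. cnorm (A u) \<le> K * cnorm u" and L: "\<And>u. cnorm (B u) \<le> L * cnorm u"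
    using assms unfolding bounded_op_def by blast
  have "cnorm (A u + B u) \<le> (K + L) * cnorm u" for u
    using cnorm_triangle [of "A u" "B u"] K [of u] L [of u] by (simp add: distrib_right)
  then show ?thesis
    using assms unfolding bounded_op_def op_add_def
    by (simp add: scaleC_add_right add_ac) blast
qed

lemma bounded_op_scale:
  assumes "bounded_op A"
  shows "bounded_op (op_scale c A)"
proof -
  obtain K where K: "\<And>u. cnorm (A u) \<le> K * cnorm u"
    using assms unfolding bounded_op_def by blast
  have "cnorm (scaleC c (A u)) \<le> (cmod c * K) * cnorm u" for u
    using mult_left_mono [OF K norm_ge_zero] by (simp add: cnorm_scaleC mult.assoc)
  then have "\<exists>M. \<forall>u. cnorm (scaleC c (A u)) \<le> M * cnorm u"
    by blast
  then show ?thesis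
    using assms unfolding bounded_op_def op_scale_def
    by (simp add: scaleC_add_right scaleC_scaleC mult.commute)
qed

lemma bounded_op_comp:
  assumes "bounded_op A" and "bounded_op B"
  shows "bounded_op (A \<circ> B)"
proof -
  obtain K where "0 \<le> K" and K: "\<And>u. cnorm (A u) \<le> K * cnorm u"
    using bounded_op_nonneg_bound [OF assms(1)] by blast
  obtain L where L: "\<And>u. cnorm (B u) \<le> L * cnorm u"
    using assms(2) unfolding bounded_op_def by blast
  have "cnorm (A (B u)) \<le> (K * L) * cnorm u" for u
    using order_trans [OF K mult_left_mono [OF L \<open>0 \<le> K\<close>]] by (simp add: mult.assoc)
  then show ?thesis
    using assms unfolding bounded_op_def by simp blast
qed

lemma adjoint_eqI:
  assumes "\<And>u v. cinner (T u) v = cinner u (S v)"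
  shows "adjoint T = S"
  unfolding adjoint_def
proof (rule the_equality)
  show "\<forall>u v. cinner (T u) v = cinner u (S v)"
    using assms by blast
next
  fix S'
  assume "\<forall>u v. cinner (T u) v = cinner u (S' v)"
  then show "S' = S"
    using assms by (metis cinner_ext ext)
qed

lemma bounded_op_has_adjoint:
  assumes "bounded_op T"
  shows "\<exists>S. \<forall>u v. cinner (T u) v = cinner u (S v)"
proof -
  obtain K where "0 \<le> K" and K: "\<And>u. cnorm (T u) \<le> K * cnorm u"
    using bounded_op_nonneg_bound [OF assms] by blast
  have "\<exists>z. \<forall>u. cinner v (T u) = cinner z u" for v
  proof (rule chilbert_riesz_representation [where K = "cnorm v * K"])
    fix u w c
    show "cinner v (T (u + w)) = cinner v (T u) + cinner v (T w)"
      by (simp add: bounded_op_add_apply [OF assms] cinner_add_right)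
    show "cinner v (T (scaleC c u)) = c * cinner v (T u)"
      by (simp add: bounded_op_scaleC_apply [OF assms] cinner_scaleC_right)
    have "cmod (cinner v (T u)) \<le> cnorm v * cnorm (T u)"
      by (rule cmod_cinner_le_cnorm)
    also have "\<dots> \<le> cnorm v * K * cnorm u"
      using mult_left_mono [OF K cnorm_nonneg] by (simp add: mult.assoc)
    finally show "cmod (cinner v (T u)) \<le> cnorm v * K * cnorm u" .
  qed
  then obtain S where "\<And>v u. cinner v (T u) = cinner (S v) u"
    by metis
  then have "cinner (T u) v = cinner u (S v)" for u v
    by (metis cinner_commute)
  then show ?thesis
    by blast
qed

lemma cinner_adjoint:
  assumes "bounded_op T"
  shows "cinner (T u) v = cinner u (adjoint T v)"
  using bounded_op_has_adjoint [OF assms] adjoint_eqI by metis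

lemma bounded_op_selfadjoint_cinner:
  assumes "bounded_op T" and "adjoint T = T"
  shows "cinner (T u) v = cinner u (T v)"
  using cinner_adjoint [OF assms(1)] assms(2) by simp

lemma commutant_bounded: "T \<in> commutant S \<Longrightarrow> bounded_op T"
  by (simp add: commutant_def)

lemma commutant_id: "id \<in> commutant S"
  by (simp add: commutant_def bounded_op_id)

lemma commutant_commute: "T \<in> commutant S \<Longrightarrow> A \<in> S \<Longrightarrow> T (A u) = A (T u)"
  unfolding commutant_def by (metis (mono_tags, lifting) comp_apply mem_Collect_eq)

lemma commutant_comp:
  assumes "T \<in> commutant S" and "U \<in> commutant S"
  shows "T \<circ> U \<in> commutant S"
proof -
  have "T (U (A u)) = A (T (U u))" if "A \<in> S" for A u
    using commutant_commute [OF assms(1) that] commutant_commute [OF assms(2) that] by simp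
  then show ?thesis
    using assms by (simp add: commutant_def bounded_op_comp fun_eq_iff)
qed

lemma commutant_add:
  assumes "\<forall>A\<in>S. bounded_op A" and "T \<in> commutant S" and "U \<in> commutant S"
  shows "op_add T U \<in> commutant S"
proof -
  have "T (A u) + U (A u) = A (T u + U u)" if "A \<in> S" for A u
    using commutant_commute [OF assms(2) that] commutant_commute [OF assms(3) that]
      bounded_op_add_apply [of A] assms(1) that by simp
  then show ?thesis
    using assms bounded_op_add [of T U] by (simp add: commutant_def fun_eq_iff op_add_def)
qed

lemma commutant_scale:
  assumes "\<forall>A\<in>S. bounded_op A" and "T \<in> commutant S"
  shows "op_scale c T \<in> commutant S"
proof -
  have "scaleC c (T (A u)) = A (scaleC c (T u))" if "A \<in> S" for A u
    using commutant_commute [OF assms(2) that] bounded_op_scaleC_apply [of A] assms(1) that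
    by simp
  then show ?thesis
    using assms bounded_op_scale [of T c] by (simp add: commutant_def fun_eq_iff op_scale_def)
qed

lemma von_neumann_algebra_eq_commutant:
  "von_neumann_algebra M \<Longrightarrow> M = commutant (commutant M)"
  by (simp add: von_neumann_algebra_def)

lemma von_neumann_algebra_bounded: "von_neumann_algebra M \<Longrightarrow> T \<in> M \<Longrightarrow> bounded_op T"
  by (auto simp: von_neumann_algebra_def)

lemma von_neumann_algebra_id: "von_neumann_algebra M \<Longrightarrow> id \<in> M"
  by (subst von_neumann_algebra_eq_commutant) (simp_all add: commutant_id)

lemma von_neumann_algebra_comp:
  "von_neumann_algebra M \<Longrightarrow> A \<in> M \<Longrightarrow> B \<in> M \<Longrightarrow> A \<circ> B \<in> M"
  using commutant_comp [of A "commutant M" B] von_neumann_algebra_eq_commutant by blast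

lemma von_neumann_algebra_add:
  "von_neumann_algebra M \<Longrightarrow> A \<in> M \<Longrightarrow> B \<in> M \<Longrightarrow> op_add A B \<in> M"
  using commutant_add [of "commutant M" A B] commutant_bounded von_neumann_algebra_eq_commutant
  by blast

lemma von_neumann_algebra_scale:
  "von_neumann_algebra M \<Longrightarrow> A \<in> M \<Longrightarrow> op_scale c A \<in> M"
  using commutant_scale [of "commutant M" A c] commutant_bounded von_neumann_algebra_eq_commutant
  by blast

lemma normal_star_automorphism_id:
  assumes "normal_star_automorphism M g" and "id \<in> M"
  shows "g id = id"
proof -
  have "g ` M = M" and mult: "\<And>a b. a \<in> M \<Longrightarrow> b \<in> M \<Longrightarrow> g (a \<circ> b) = g a \<circ> g b"
    using assms(1) unfolding normal_star_automorphism_def by (blast dest: bij_betw_imp_surj_on)+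
  then obtain a where "a \<in> M" and "g a = id"
    using assms(2) by (metis imageE)
  then have "g id = g id \<circ> g a"
    by simp
  also have "\<dots> = g a"
    using mult [OF assms(2) \<open>a \<in> M\<close>] by simp
  finally show ?thesis
    using \<open>g a = id\<close> by simp
qed

lemma faithful_state_moments_one_imp_id:
  assumes vn: "von_neumann_algebra M" and "is_state M \<phi>" and "faithful M \<phi>"
    and "X \<in> M" and "adjoint X = X" and "\<phi> X = 1" and "\<phi> (X \<circ> X) = 1"
  shows "X = id"
proof -
  have add: "\<And>A B. A \<in> M \<Longrightarrow> B \<in> M \<Longrightarrow> \<phi> (op_add A B) = \<phi> A + \<phi> B"
    and scale: "\<And>c A. A \<in> M \<Longrightarrow> \<phi> (op_scale c A) = c * \<phi> A" and "\<phi> id = 1"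
    using \<open>is_state M \<phi>\<close> unfolding is_state_def by auto
  have "bounded_op X"
    using vn \<open>X \<in> M\<close> by (rule von_neumann_algebra_bounded)
  have M_closed: "X \<circ> X \<in> M" "op_scale (- 2) X \<in> M" "id \<in> M" "op_scale (- 1) id \<in> M"
    by (intro von_neumann_algebra_comp von_neumann_algebra_scale von_neumann_algebra_id vn
        \<open>X \<in> M\<close>)+
  define A where "A = op_add X (op_scale (- 1) id)"
  have A_apply: "A u = X u - u" for u
    by (simp add: A_def op_add_def op_scale_def)
  have "A \<in> M"
    unfolding A_def using vn \<open>X \<in> M\<close> M_closed(4) by (rule von_neumann_algebra_add)
  have "adjoint A = A"
    by (rule adjoint_eqI) (simp add: A_apply cinner_diff_left cinner_diff_right
        bounded_op_selfadjoint_cinner [OF \<open>bounded_op X\<close> \<open>adjoint X = X\<close>])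
  have "A \<circ> A = op_add (X \<circ> X) (op_add (op_scale (- 2) X) id)"
  proof
    fix u
    have "scaleC (- 2) (X u) = - X u - X u"
      using scaleC_add_left [of "- 1" "- 1" "X u"] by simp
    then show "(A \<circ> A) u = op_add (X \<circ> X) (op_add (op_scale (- 2) X) id) u"
      by (simp add: A_apply op_add_def op_scale_def bounded_op_diff_apply [OF \<open>bounded_op X\<close>]
          algebra_simps)
  qed
  then have "\<phi> (adjoint A \<circ> A) = \<phi> (X \<circ> X) + (- 2 * \<phi> X + \<phi> id)"
    using \<open>adjoint A = A\<close> \<open>X \<in> M\<close> M_closed
    by (simp add: add scale von_neumann_algebra_add [OF vn])
  then have "\<phi> (adjoint A \<circ> A) = 0"
    using \<open>\<phi> X = 1\<close> \<open>\<phi> (X \<circ> X) = 1\<close> \<open>\<phi> id = 1\<close> by simp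
  then have "A = op_zero"
    using \<open>faithful M \<phi>\<close> \<open>A \<in> M\<close> unfolding faithful_def by blast
  then have "X u = u" for u
    using A_apply [of u] by (simp add: op_zero_def)
  then show ?thesis
    by (simp add: fun_eq_iff)
qed

theorem lemma2p11:
  fixes M :: "('h::chilbert \<Rightarrow> 'h) set"
    and G :: "(('h \<Rightarrow> 'h) \<Rightarrow> ('h \<Rightarrow> 'h)) set"
    and \<phi> :: "('h \<Rightarrow> 'h) \<Rightarrow> complex"
    and x :: "(('h \<Rightarrow> 'h) \<Rightarrow> ('h \<Rightarrow> 'h)) \<Rightarrow> ('h \<Rightarrow> 'h)"
  assumes "von_neumann_algebra M"
    and "automorphism_group M G"
    and "strongly_quasi_invariant M G \<phi> x"
    and "g \<in> G"
    and "x g \<in> fixed_points M G"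
  shows "x g = id"
proof (rule faithful_state_moments_one_imp_id [OF assms(1)])
  have cocycle: "\<And>a. a \<in> M \<Longrightarrow> \<phi> (g a) = \<phi> (x g \<circ> a)"
    and state: "is_state M \<phi>" and "faithful M \<phi>" and "x g \<in> M" and "adjoint (x g) = x g"
    using assms(3,4) unfolding strongly_quasi_invariant_def by auto
  then show "is_state M \<phi>" "faithful M \<phi>" "x g \<in> M" "adjoint (x g) = x g"
    by simp_all
  have "id \<in> M"
    using assms(1) by (rule von_neumann_algebra_id)
  moreover have "g id = id"
    using assms(2,4) \<open>id \<in> M\<close> normal_star_automorphism_id
    unfolding automorphism_group_def by blast
  ultimately show "\<phi> (x g) = 1"
    using cocycle [of id] state by (simp add: is_state_def)
  have "g (x g) = x g"
    using assms(4,5) unfolding fixed_points_def by blast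
  then show "\<phi> (x g \<circ> x g) = 1"
    using cocycle [OF \<open>x g \<in> M\<close>] \<open>\<phi> (x g) = 1\<close> by simp
qed

end
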